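(* Let $d\ge1$, $\alpha\in(0,2)$ and $\gamma\in[0,\alpha\wedge d)$. Suppose $F$ is a measurable function with $|F|(z,w)\le A(|z-w|^\beta\wedge1)$ for some $A>0$ and $\beta>\alpha$. Then there exists $C_8=C_8(\beta,d,\alpha,\gamma)>0$ such that for every Borel subset $D$ of $\mathbb{R}^d$ (with $F$ restricted to $D\times D$), $N^{\alpha,\gamma}_F(t)\le C_8\,A\,t$ for all $t>0$. In particular $F\in\mathbf{J}_{\alpha,\gamma}$.
   Context: $\delta_D(x)$ is the Euclidean distance from $x$ to $D^c$; $q(t,x,y):=t^{-d/\alpha}\wedge\frac{t}{|x-y|^{d+\alpha}}$. For a measurable $F$ on $D\times D$ vanishing on the diagonal, $N^{\alpha,\gamma}_F(t):=\sup_{y\in D}\int_0^t\int_{D\times D}\big(1\wedge\frac{\delta_D(z)}{s^{1/\alpha}}\big)^\gamma q(s,y,z)\big(1+\frac{|z-w|\wedge t^{1/\alpha}}{|y-z|}\big)^\gamma\frac{|F|(z,w)+|F|(w,z)}{|z-w|^{d+\alpha}}\,dw\,dz\,ds$, and $F\in\mathbf{J}_{\alpha,\gamma}$ iff $F$ is bounded and $\lim_{t\downarrow0}N^{\alpha,\gamma}_F(t)=0$. *)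

theory Defs
  imports "HOL-Analysis.Analysis"
begin

(* x ^ g for x >= 0, with the mathematical convention x^0 = 1 (Isabelle has 0 powr 0 = 0) *)
definition rpow :: "real \<Rightarrow> real \<Rightarrow> real" where
  "rpow x g = (if g = 0 then 1 else x powr g)"

(* delta_D(z) = infdist z (-D); if D^c is empty, delta_D = +infinity and the factor is 1 *)
definition bdry_factor :: "'a::euclidean_space set \<Rightarrow> real \<Rightarrow> real \<Rightarrow> real \<Rightarrow> 'a \<Rightarrow> real" where
  "bdry_factor D \<alpha> \<gamma> s z =
     (if - D = {} then 1 else rpow (min 1 (infdist z (- D) / s powr (1 / \<alpha>))) \<gamma>)"

(* q(t,x,y) = t^{-d/alpha} \<and> t/|x-y|^{d+alpha}, d = DIM('a) (with t/0 = infinity) *)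
definition qker :: "real \<Rightarrow> real \<Rightarrow> 'a::euclidean_space \<Rightarrow> 'a \<Rightarrow> real" where
  "qker \<alpha> t x y =
     (if x = y then t powr (- real DIM('a) / \<alpha>)
      else min (t powr (- real DIM('a) / \<alpha>)) (t / norm (x - y) powr (real DIM('a) + \<alpha>)))"

definition NF :: "real \<Rightarrow> real \<Rightarrow> 'a::euclidean_space set \<Rightarrow> ('a \<Rightarrow> 'a \<Rightarrow> real) \<Rightarrow> real \<Rightarrow> ennreal" where
  "NF \<alpha> \<gamma> D F t =
     (SUP y\<in>D. \<integral>\<^sup>+ s. \<integral>\<^sup>+ z. \<integral>\<^sup>+ w.
        indicator {0<..<t} s * indicator D z * indicator D w *
        ennreal (bdry_factor D \<alpha> \<gamma> s z * qker \<alpha> s y z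
          * rpow (1 + (if y = z then 0 else min (norm (z - w)) (t powr (1 / \<alpha>)) / norm (y - z))) \<gamma>
          * (\<bar>F z w\<bar> + \<bar>F w z\<bar>) / norm (z - w) powr (real DIM('a) + \<alpha>))
        \<partial>lborel \<partial>lborel \<partial>lborel)"

definition J_class :: "real \<Rightarrow> real \<Rightarrow> 'a::euclidean_space set \<Rightarrow> ('a \<Rightarrow> 'a \<Rightarrow> real) \<Rightarrow> bool" where
  "J_class \<alpha> \<gamma> D F \<longleftrightarrow>
     (\<exists>M. \<forall>z\<in>D. \<forall>w\<in>D. \<bar>F z w\<bar> \<le> M) \<and> ((NF \<alpha> \<gamma> D F \<longlongrightarrow> 0) (at_right 0))"

end

theory Submission
  imports Defs
begin

text \<open>
  The jump density \<open>(\<bar>F z w\<bar> + \<bar>F w z\<bar>) / \<bar>z - w\<bar> powr (d + \<alpha>)\<close> is at most \<open>2 A\<close> times a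
  fixed radial profile of \<open>w - z\<close>, with a singularity of order \<open>d + \<alpha> - \<beta> < d\<close> at the origin and
  decay of order \<open>d + \<alpha>\<close> at infinity, so the \<open>w\<close>-integral is bounded uniformly in \<open>z\<close>.
  The boundary factor is at most 1, and \<open>min \<bar>z - w\<bar> (t powr (1/\<alpha>)) / \<bar>y - z\<bar> \<le> t powr (1/\<alpha>) / \<bar>y - z\<bar>\<close>,
  so the remaining weight in \<open>z\<close> is dominated by a radial function of \<open>z - y\<close> at the scale
  \<open>s powr (1/\<alpha>)\<close>, whose integral is at most \<open>M\<^sub>1 + M\<^sub>2 (t/s) powr (\<gamma>/\<alpha>)\<close>. Integrating over
  \<open>0 < s < t\<close> gives a multiple of \<open>t\<close> because \<open>\<gamma> < \<alpha>\<close>. All radial integrals are estimated by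
  summing over dyadic balls.
\<close>

definition ball_powr_const :: "nat \<Rightarrow> real \<Rightarrow> real" where
  "ball_powr_const n p = unit_ball_vol n * (2 powr p / (1 - 2 powr (p - n)))"

definition exterior_powr_const :: "nat \<Rightarrow> real \<Rightarrow> real" where
  "exterior_powr_const n p = unit_ball_vol n * (2 ^ n / (1 - 2 powr (n - p)))"

lemma ball_powr_const_pos: "p < real n \<Longrightarrow> ball_powr_const n p > 0"
  unfolding ball_powr_const_def by (intro divide_pos_pos mult_pos_pos) (auto simp: powr_less_one)

lemma exterior_powr_const_pos: "real n < p \<Longrightarrow> exterior_powr_const n p > 0"
  unfolding exterior_powr_const_def by (intro divide_pos_pos mult_pos_pos) (auto simp: powr_less_one)

lemma nn_integral_norm_powr_le_sum_balls:
  fixes S :: "'a::euclidean_space set" and p :: real and a \<rho> :: "nat \<Rightarrow> real"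
  assumes "S \<in> sets borel" and a: "\<And>k. a k \<ge> 0" and \<rho>: "\<And>k. \<rho> k \<ge> 0"
    and cover: "\<And>x. x \<in> S \<Longrightarrow> x \<noteq> 0 \<Longrightarrow> \<exists>k. norm x powr (-p) \<le> a k \<and> norm x \<le> \<rho> k"
    and sums: "(\<lambda>k. a k * \<rho> k ^ DIM('a)) sums L"
  shows "(\<integral>\<^sup>+x. indicator S x * ennreal (norm x powr (-p)) \<partial>lborel) \<le> ennreal (unit_ball_vol DIM('a) * L)"
proof -
  have "(\<integral>\<^sup>+x. indicator S x * ennreal (norm x powr (-p)) \<partial>lborel)
      \<le> (\<integral>\<^sup>+(x::'a). (\<Sum>k. ennreal (a k) * indicator (cball 0 (\<rho> k)) x) \<partial>lborel)"
  proof (intro nn_integral_mono)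
    fix x :: 'a
    show "indicator S x * ennreal (norm x powr (-p)) \<le> (\<Sum>k. ennreal (a k) * indicator (cball 0 (\<rho> k)) x)"
    proof (cases "x \<in> S \<and> x \<noteq> 0")
      case True
      then obtain k where "norm x powr (-p) \<le> a k" "norm x \<le> \<rho> k"
        using cover by blast
      then have "indicator S x * ennreal (norm x powr (-p)) \<le> ennreal (a k) * indicator (cball 0 (\<rho> k)) x"
        using True by (auto simp: indicator_def intro: ennreal_leI)
      also have "\<dots> \<le> (\<Sum>k. ennreal (a k) * indicator (cball 0 (\<rho> k)) x)"
        using sum_le_suminf[OF summableI, of "{k}"] by simp
      finally show ?thesis .
    qed (auto simp: indicator_def)
  qed
  also have "\<dots> = (\<Sum>k. ennreal (unit_ball_vol DIM('a) * (a k * \<rho> k ^ DIM('a))))"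
    by (subst nn_integral_suminf, measurable)
      (auto simp: nn_integral_cmult_indicator emeasure_cball a \<rho> ennreal_mult[symmetric] mult_ac)
  also have "\<dots> = ennreal (unit_ball_vol DIM('a) * L)"
    by (intro suminf_ennreal_eq sums_mult sums) (simp add: a \<rho>)
  finally show ?thesis .
qed

lemma nn_integral_ball_norm_powr_le:
  fixes p r :: real
  assumes p: "0 \<le> p" "p < real DIM('a::euclidean_space)" and r: "r > 0"
  shows "(\<integral>\<^sup>+(x::'a). indicator (cball 0 r) x * ennreal (norm x powr (-p)) \<partial>lborel)
    \<le> ennreal (ball_powr_const DIM('a) p * r powr (DIM('a) - p))"
  unfolding ball_powr_const_def mult.assoc
proof (rule nn_integral_norm_powr_le_sum_balls)
  define d where "d = real DIM('a)"
  have "2 powr (p - d) < 1"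
    using p by (simp add: d_def powr_less_one)
  then have "(\<lambda>k. (2 powr p * r powr (d - p)) * (2 powr (p - d)) ^ k) sums
      ((2 powr p * r powr (d - p)) * (1 / (1 - 2 powr (p - d))))"
    by (intro sums_mult geometric_sums) simp
  moreover have "(r / 2^(k+1)) powr (-p) * (r / 2^k) ^ DIM('a)
      = (2 powr p * r powr (d - p)) * (2 powr (p - d)) ^ k" for k :: nat
  proof -
    have "(r / 2^k) ^ DIM('a) = (r / 2^k) powr d"
      using r by (simp add: d_def powr_realpow)
    also have "\<dots> = r powr d / 2 powr (k * d)"
      using r by (simp add: powr_divide powr_realpow[symmetric] powr_powr)
    finally have 1: "(r / 2^k) ^ DIM('a) = r powr d / 2 powr (k * d)" .
    have "(2::real)^(k+1) = 2 powr (real k + 1)"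
      using powr_realpow[of 2 "k+1"] by (simp add: add.commute)
    then have 2: "(r / 2^(k+1)) powr (-p) = r powr (-p) * 2 powr ((k+1) * p)"
      using r by (simp add: powr_divide powr_powr powr_minus divide_simps add.commute)
    have 3: "(2 powr (p - d)) ^ k = 2 powr (k * (p - d))"
      by (simp add: powr_realpow[symmetric] powr_powr mult.commute)
    show ?thesis
      unfolding 1 2 3 by (simp add: powr_diff powr_add powr_minus field_simps right_diff_distrib distrib_right)
  qed
  ultimately show "(\<lambda>k. (r / 2^(k+1)) powr (-p) * (r / 2^k) ^ DIM('a)) sums
      (2 powr p / (1 - 2 powr (p - DIM('a))) * r powr (DIM('a) - p))"
    by (simp add: d_def)
next
  fix x :: 'a assume "x \<in> cball 0 r" "x \<noteq> 0"
  then have x: "0 < norm x" "norm x \<le> r"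
    by auto
  define q where "q = r / norm x"
  have q: "1 \<le> q"
    using x by (simp add: q_def le_divide_eq)
  define k where "k = nat \<lfloor>log 2 q\<rfloor>"
  have "0 \<le> log 2 q"
    using q by simp
  then have "real k \<le> log 2 q" "log 2 q < real k + 1"
    by (auto simp: k_def)
  then have "2 powr real k \<le> q" "q < 2 powr (real k + 1)"
    using q by (simp_all add: le_log_iff log_less_iff)
  then have "norm x \<le> r / 2^k" "r / 2^(k+1) \<le> norm x"
    unfolding q_def using x powr_realpow[of 2 "k+1"] by (simp_all add: powr_realpow field_simps add.commute)
  moreover from this have "norm x powr (-p) \<le> (r / 2^(k+1)) powr (-p)"
    using p r by (intro powr_mono2') auto
  ultimately show "\<exists>k. norm x powr (-p) \<le> (r / 2^(k+1)) powr (-p) \<and> norm x \<le> r / 2^k"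
    by blast
qed (use r in auto)

lemma nn_integral_exterior_norm_powr_le:
  fixes p r :: real
  assumes p: "real DIM('a::euclidean_space) < p" and r: "r > 0"
  shows "(\<integral>\<^sup>+(x::'a). indicator {x. r \<le> norm x} x * ennreal (norm x powr (-p)) \<partial>lborel)
    \<le> ennreal (exterior_powr_const DIM('a) p * r powr (DIM('a) - p))"
  unfolding exterior_powr_const_def mult.assoc
proof (rule nn_integral_norm_powr_le_sum_balls)
  define d where "d = real DIM('a)"
  have "2 powr (d - p) < 1"
    using p by (simp add: d_def powr_less_one)
  then have "(\<lambda>k. (2 ^ DIM('a) * r powr (d - p)) * (2 powr (d - p)) ^ k) sums
      ((2 ^ DIM('a) * r powr (d - p)) * (1 / (1 - 2 powr (d - p))))"
    by (intro sums_mult geometric_sums) simp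
  moreover have "(r * 2^k) powr (-p) * (r * 2^(k+1)) ^ DIM('a)
      = (2 ^ DIM('a) * r powr (d - p)) * (2 powr (d - p)) ^ k" for k :: nat
  proof -
    have e: "(2::real)^(k+1) = 2 powr (real k + 1)"
      using powr_realpow[of 2 "k+1"] by (simp add: add.commute)
    have "(r * 2^(k+1)) ^ DIM('a) = (r * 2^(k+1)) powr d"
      using r by (simp add: d_def powr_realpow)
    also have "\<dots> = r powr d * 2 powr ((k+1) * d)"
      unfolding e using r by (simp add: powr_mult powr_powr add.commute)
    finally have 1: "(r * 2^(k+1)) ^ DIM('a) = r powr d * 2 powr ((k+1) * d)" .
    have "(2::real)^k = 2 powr (real k)"
      by (simp add: powr_realpow)
    then have 2: "(r * 2^k) powr (-p) = r powr (-p) * 2 powr (k * (-p))"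
      using r by (simp add: powr_mult powr_powr)
    have 3: "(2 powr (d - p)) ^ k = 2 powr (k * (d - p))"
      by (simp add: powr_realpow[symmetric] powr_powr mult.commute)
    have 4: "(2::real) ^ DIM('a) = 2 powr d"
      by (simp add: d_def powr_realpow)
    show ?thesis
      unfolding 1 2 3 4 by (simp add: powr_diff powr_add powr_minus field_simps right_diff_distrib distrib_right)
  qed
  ultimately show "(\<lambda>k. (r * 2^k) powr (-p) * (r * 2^(k+1)) ^ DIM('a)) sums
      (2 ^ DIM('a) / (1 - 2 powr (DIM('a) - p)) * r powr (DIM('a) - p))"
    by (simp add: d_def)
next
  fix x :: 'a assume "x \<in> {x. r \<le> norm x}"
  then have x: "r \<le> norm x"
    by simp
  define q where "q = norm x / r"
  have q: "1 \<le> q"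
    using x r by (simp add: q_def le_divide_eq)
  define k where "k = nat \<lfloor>log 2 q\<rfloor>"
  have "0 \<le> log 2 q"
    using q by simp
  then have "real k \<le> log 2 q" "log 2 q < real k + 1"
    by (auto simp: k_def)
  then have "2 powr real k \<le> q" "q < 2 powr (real k + 1)"
    using q by (simp_all add: le_log_iff log_less_iff)
  then have "r * 2^k \<le> norm x" "norm x \<le> r * 2^(k+1)"
    unfolding q_def using r powr_realpow[of 2 "k+1"] by (simp_all add: powr_realpow field_simps add.commute)
  moreover from this have "norm x powr (-p) \<le> (r * 2^k) powr (-p)"
    using p r by (intro powr_mono2') auto
  ultimately show "\<exists>k. norm x powr (-p) \<le> (r * 2^k) powr (-p) \<and> norm x \<le> r * 2^(k+1)"
    by blast
qed (use r in auto)

lemma nn_integral_lborel_translate: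
  fixes f :: "'a::euclidean_space \<Rightarrow> ennreal"
  assumes "f \<in> borel_measurable borel"
  shows "(\<integral>\<^sup>+x. f (x - z) \<partial>lborel) = (\<integral>\<^sup>+x. f x \<partial>lborel)"
proof -
  have "(\<integral>\<^sup>+x. f x \<partial>lborel) = (\<integral>\<^sup>+x. f x \<partial>distr lborel borel ((+) (-z)))"
    by (simp add: lborel_distr_plus)
  also have "\<dots> = (\<integral>\<^sup>+x. f (-z + x) \<partial>lborel)"
    using assms by (intro nn_integral_distr) auto
  finally show ?thesis
    by simp
qed

lemma nn_integral_Icc_0_powr:
  fixes q t :: real
  assumes "0 \<le> q" "q < 1" "t \<ge> 0"
  shows "(\<integral>\<^sup>+s. indicator {0..t} s * ennreal (s powr (-q)) \<partial>lborel) = ennreal (t powr (1 - q) / (1 - q))"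
proof -
  have "((\<lambda>s. s powr (-q)) has_integral (t powr (1 - q) / (1 - q))) {0..t}"
    using has_integral_powr_from_0[of "-q" t] assms by simp
  then have "((\<lambda>s. if s \<in> {0..t} then s powr (-q) else 0) has_integral (t powr (1 - q) / (1 - q))) UNIV"
    by (subst has_integral_restrict_UNIV)
  then have "(\<integral>\<^sup>+s. ennreal (if s \<in> {0..t} then s powr (-q) else 0) \<partial>lborel) = ennreal (t powr (1 - q) / (1 - q))"
    by (intro nn_integral_has_integral_lborel) auto
  moreover have "ennreal (if s \<in> {0..t} then s powr (-q) else 0) = indicator {0..t} s * ennreal (s powr (-q))" for s
    by (simp add: indicator_def)
  ultimately show ?thesis
    by simp
qed

lemma nn_integral_Ioo_const_plus_powr_le:
  fixes a b c q t :: real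
  assumes q: "0 \<le> q" "q < 1" and t: "t > 0" and abc: "a \<ge> 0" "b \<ge> 0" "c \<ge> 0"
  shows "(\<integral>\<^sup>+s. ennreal (indicator {0<..<t} s * c * (a + b * s powr (-q))) \<partial>lborel)
    \<le> ennreal (c * (a * t + b * (t powr (1 - q) / (1 - q))))"
proof -
  have "(\<integral>\<^sup>+s. ennreal (indicator {0<..<t} s * c * (a + b * s powr (-q))) \<partial>lborel)
      \<le> (\<integral>\<^sup>+s. ennreal (c * a) * indicator {0..t} s + ennreal (c * b) * (indicator {0..t} s * ennreal (s powr (-q))) \<partial>lborel)"
    using abc by (intro nn_integral_mono)
      (auto simp: indicator_def algebra_simps ennreal_plus[symmetric] ennreal_mult[symmetric] simp del: ennreal_plus)
  also have "\<dots> = ennreal (c * a) * ennreal t + ennreal (c * b) * ennreal (t powr (1 - q) / (1 - q))"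
    using t q by (subst nn_integral_add) (auto simp: nn_integral_cmult nn_integral_Icc_0_powr)
  also have "\<dots> = ennreal (c * (a * t + b * (t powr (1 - q) / (1 - q))))"
    using abc t q by (simp add: algebra_simps ennreal_mult[symmetric] ennreal_plus[symmetric] del: ennreal_plus)
  finally show ?thesis .
qed

lemma bdry_factor_bounds:
  assumes "0 \<le> \<gamma>" "s > 0"
  shows "0 \<le> bdry_factor D \<alpha> \<gamma> s z" "bdry_factor D \<alpha> \<gamma> s z \<le> 1"
proof -
  have "0 \<le> min 1 (infdist z (- D) / s powr (1 / \<alpha>))" "min 1 (infdist z (- D) / s powr (1 / \<alpha>)) \<le> 1"
    using assms by (auto simp: infdist_nonneg)
  then show "0 \<le> bdry_factor D \<alpha> \<gamma> s z" "bdry_factor D \<alpha> \<gamma> s z \<le> 1"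
    using assms unfolding bdry_factor_def rpow_def by (auto intro: powr_le1)
qed

lemma rpow_one_plus_le:
  fixes u v \<gamma> :: real
  assumes "0 \<le> \<gamma>" "0 \<le> u" "u \<le> v"
  shows "rpow (1 + u) \<gamma> \<le> 2 powr \<gamma> * (1 + v powr \<gamma>)"
proof (cases "\<gamma> = 0")
  case False
  have "rpow (1 + u) \<gamma> \<le> (1 + v) powr \<gamma>"
    using assms False by (simp add: rpow_def powr_mono2)
  also have "\<dots> \<le> 2 powr \<gamma> * (1 + v powr \<gamma>)"
  proof (cases "v \<le> 1")
    case True
    then have "(1 + v) powr \<gamma> \<le> 2 powr \<gamma>"
      using assms by (intro powr_mono2) auto
    moreover have "0 \<le> 2 powr \<gamma> * v powr \<gamma>"
      by simp
    ultimately show ?thesis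
      unfolding distrib_left by linarith
  next
    case False
    then have "(1 + v) powr \<gamma> \<le> (2 * v) powr \<gamma>"
      using assms by (intro powr_mono2) auto
    moreover have "0 \<le> 2 powr \<gamma>"
      by simp
    ultimately show ?thesis
      using False unfolding distrib_left powr_mult by linarith
  qed
  finally show ?thesis .
qed (simp add: rpow_def)

text \<open>
  With \<open>\<rho> = s powr (1/\<alpha>)\<close> and \<open>z \<noteq> y\<close> one has \<open>qker \<alpha> s y z = min (\<rho> powr -d) (\<rho> powr \<alpha> * \<bar>z - y\<bar> powr (-d-\<alpha>))\<close>;
  the terms with \<open>T = t powr (\<gamma>/\<alpha>)\<close> absorb the factor \<open>(1 + t powr (1/\<alpha>) / \<bar>z - y\<bar>) powr \<gamma>\<close>.
\<close>

definition qker_majorant :: "real \<Rightarrow> real \<Rightarrow> real \<Rightarrow> real \<Rightarrow> 'a::euclidean_space \<Rightarrow> real" where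
  "qker_majorant \<alpha> \<gamma> T \<rho> x =
     \<rho> powr (- real DIM('a)) * indicator (cball 0 \<rho>) x * (1 + T * norm x powr (-\<gamma>))
     + \<rho> powr \<alpha> * indicator {x. \<rho> \<le> norm x} x
        * (norm x powr (-(real DIM('a) + \<alpha>)) + T * norm x powr (-(real DIM('a) + \<alpha> + \<gamma>)))"

lemma qker_majorant_nonneg: "T \<ge> 0 \<Longrightarrow> qker_majorant \<alpha> \<gamma> T \<rho> x \<ge> 0"
  unfolding qker_majorant_def by (intro add_nonneg_nonneg mult_nonneg_nonneg) (auto simp: indicator_def)

lemma borel_measurable_qker_majorant [measurable]:
  "qker_majorant \<alpha> \<gamma> T \<rho> \<in> borel_measurable (borel :: 'a::euclidean_space measure)"
proof -
  have "cball (0::'a) \<rho> \<in> sets borel" "{x::'a. \<rho> \<le> norm x} \<in> sets borel"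
    by simp_all
  then show ?thesis
    unfolding qker_majorant_def[abs_def] by measurable
qed

lemma qker_majorant_ge_ball:
  assumes "norm x \<le> \<rho>" "T \<ge> 0"
  shows "\<rho> powr (- real DIM('a)) * (1 + T * norm x powr (-\<gamma>)) \<le> qker_majorant \<alpha> \<gamma> T \<rho> (x::'a::euclidean_space)"
  using assms unfolding qker_majorant_def by (simp add: indicator_def)

lemma qker_majorant_ge_exterior:
  assumes "\<rho> \<le> norm x" "T \<ge> 0"
  shows "\<rho> powr \<alpha> * (norm x powr (-(real DIM('a) + \<alpha>)) + T * norm x powr (-(real DIM('a) + \<alpha> + \<gamma>)))
    \<le> qker_majorant \<alpha> \<gamma> T \<rho> (x::'a::euclidean_space)"
  using assms unfolding qker_majorant_def by (simp add: indicator_def)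

lemma qker_mult_rpow_le_majorant:
  fixes y z w :: "'a::euclidean_space"
  assumes \<alpha>: "0 < \<alpha>" and \<gamma>: "0 \<le> \<gamma>" and t: "t > 0" and s: "s > 0"
  shows "qker \<alpha> s y z * rpow (1 + (if y = z then 0 else min (norm (z - w)) (t powr (1 / \<alpha>)) / norm (y - z))) \<gamma>
    \<le> 2 powr \<gamma> * qker_majorant \<alpha> \<gamma> (t powr (\<gamma> / \<alpha>)) (s powr (1 / \<alpha>)) (z - y)"
proof -
  define d where "d = real DIM('a)"
  define \<rho> where "\<rho> = s powr (1 / \<alpha>)"
  define T where "T = t powr (\<gamma> / \<alpha>)"
  have \<rho>: "\<rho> > 0"
    using s by (simp add: \<rho>_def)
  have s_eq: "s powr (- d / \<alpha>) = \<rho> powr (- d)" "s = \<rho> powr \<alpha>"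
    using s \<alpha> by (simp_all add: \<rho>_def powr_powr)
  have "1 \<le> 2 powr \<gamma>"
    using \<gamma> by (simp add: ge_one_powr_ge_zero)
  show ?thesis
  proof (cases "y = z")
    case True
    have "qker \<alpha> s y z = \<rho> powr (- d)"
      using True s_eq(1) by (simp add: qker_def d_def)
    moreover have "qker_majorant \<alpha> \<gamma> T \<rho> (z - y) = \<rho> powr (- d)"
      using True \<rho> by (simp add: qker_majorant_def d_def)
    moreover have "\<rho> powr (- d) \<le> 2 powr \<gamma> * \<rho> powr (- d)"
      using mult_right_mono[OF \<open>1 \<le> 2 powr \<gamma>\<close>, of "\<rho> powr (- d)"] by simp
    ultimately show ?thesis
      using True by (simp add: rpow_def flip: T_def \<rho>_def)
  next
    case False
    define m where "m = norm (z - y)"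
    have m: "m > 0" "norm (y - z) = m"
      using False by (simp_all add: m_def norm_minus_commute)
    have u: "0 \<le> min (norm (z - w)) (t powr (1 / \<alpha>)) / m"
      "min (norm (z - w)) (t powr (1 / \<alpha>)) / m \<le> t powr (1 / \<alpha>) / m"
      using m by (simp_all add: divide_right_mono)
    have "(t powr (1 / \<alpha>) / m) powr \<gamma> = T * m powr (-\<gamma>)"
      using m t by (simp add: T_def powr_divide powr_powr powr_minus divide_simps)
    then have R: "rpow (1 + min (norm (z - w)) (t powr (1 / \<alpha>)) / m) \<gamma> \<le> 2 powr \<gamma> * (1 + T * m powr (-\<gamma>))"
      using rpow_one_plus_le[OF \<gamma> u] by simp
    have "s / m powr (d + \<alpha>) = \<rho> powr \<alpha> * m powr (- (d + \<alpha>))"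
      using s_eq(2) by (metis divide_inverse powr_minus)
    then have q: "qker \<alpha> s y z = min (\<rho> powr (- d)) (\<rho> powr \<alpha> * m powr (- (d + \<alpha>)))"
      using False by (simp only: qker_def if_False m(2) s_eq(1) flip: d_def)
    have "qker \<alpha> s y z * rpow (1 + min (norm (z - w)) (t powr (1 / \<alpha>)) / m) \<gamma>
        \<le> min (\<rho> powr (- d)) (\<rho> powr \<alpha> * m powr (- (d + \<alpha>))) * (2 powr \<gamma> * (1 + T * m powr (-\<gamma>)))"
      unfolding q by (intro mult_left_mono R) simp
    also have "\<dots> \<le> 2 powr \<gamma> * qker_majorant \<alpha> \<gamma> T \<rho> (z - y)"
    proof (cases "m \<le> \<rho>")
      case True
      have "min (\<rho> powr (- d)) (\<rho> powr \<alpha> * m powr (- (d + \<alpha>))) * (2 powr \<gamma> * (1 + T * m powr (-\<gamma>)))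
          \<le> 2 powr \<gamma> * (\<rho> powr (- d) * (1 + T * m powr (-\<gamma>)))"
        using T_def by (simp add: mult_right_mono)
      also have "\<dots> \<le> 2 powr \<gamma> * qker_majorant \<alpha> \<gamma> T \<rho> (z - y)"
        using True by (simp add: qker_majorant_ge_ball T_def d_def m_def)
      finally show ?thesis .
    next
      case False
      have "min (\<rho> powr (- d)) (\<rho> powr \<alpha> * m powr (- (d + \<alpha>))) * (2 powr \<gamma> * (1 + T * m powr (-\<gamma>)))
          \<le> \<rho> powr \<alpha> * m powr (- (d + \<alpha>)) * (2 powr \<gamma> * (1 + T * m powr (-\<gamma>)))"
        using T_def by (intro mult_right_mono) simp_all
      also have "\<dots> = 2 powr \<gamma> * (\<rho> powr \<alpha> * (m powr (- (d + \<alpha>)) + T * m powr (- (d + \<alpha> + \<gamma>))))"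
        by (simp add: algebra_simps flip: powr_add)
      also have "\<dots> \<le> 2 powr \<gamma> * qker_majorant \<alpha> \<gamma> T \<rho> (z - y)"
        using False qker_majorant_ge_exterior[of \<rho> "z - y" T \<alpha> \<gamma>] by (simp add: T_def d_def m_def)
      finally show ?thesis .
    qed
    finally show ?thesis
      using False m by (simp add: T_def \<rho>_def)
  qed
qed

lemma nn_integral_qker_majorant_le:
  fixes \<alpha> \<gamma> T \<rho> :: real
  assumes \<alpha>: "0 < \<alpha>" and \<gamma>: "0 \<le> \<gamma>" "\<gamma> < real DIM('a::euclidean_space)" and T: "T \<ge> 0" and \<rho>: "\<rho> > 0"
  shows "(\<integral>\<^sup>+(x::'a). ennreal (qker_majorant \<alpha> \<gamma> T \<rho> x) \<partial>lborel)
    \<le> ennreal (unit_ball_vol DIM('a) + exterior_powr_const DIM('a) (DIM('a) + \<alpha>)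
        + T * (ball_powr_const DIM('a) \<gamma> + exterior_powr_const DIM('a) (DIM('a) + \<alpha> + \<gamma>)) * \<rho> powr (-\<gamma>))"
proof -
  define d where "d = real DIM('a)"
  let ?B = "cball (0::'a) \<rho>" and ?E = "{x::'a. \<rho> \<le> norm x}"
  have [measurable]: "?B \<in> sets borel" "?E \<in> sets borel"
    by simp_all
  have eq: "ennreal (qker_majorant \<alpha> \<gamma> T \<rho> x) =
      ennreal (\<rho> powr (- d)) * indicator ?B x
      + ennreal (\<rho> powr (- d) * T) * (indicator ?B x * ennreal (norm x powr (-\<gamma>)))
      + ennreal (\<rho> powr \<alpha>) * (indicator ?E x * ennreal (norm x powr (-(d + \<alpha>))))
      + ennreal (\<rho> powr \<alpha> * T) * (indicator ?E x * ennreal (norm x powr (-(d + \<alpha> + \<gamma>))))" for x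
    using T unfolding qker_majorant_def d_def
    by (auto simp: indicator_def ennreal_plus[symmetric] ennreal_mult[symmetric] algebra_simps simp del: ennreal_plus)
  have "(\<integral>\<^sup>+(x::'a). ennreal (qker_majorant \<alpha> \<gamma> T \<rho> x) \<partial>lborel) =
      ennreal (\<rho> powr (- d)) * emeasure lborel ?B
      + ennreal (\<rho> powr (- d) * T) * (\<integral>\<^sup>+x. indicator ?B x * ennreal (norm x powr (-\<gamma>)) \<partial>lborel)
      + ennreal (\<rho> powr \<alpha>) * (\<integral>\<^sup>+x. indicator ?E x * ennreal (norm x powr (-(d + \<alpha>))) \<partial>lborel)
      + ennreal (\<rho> powr \<alpha> * T) * (\<integral>\<^sup>+x. indicator ?E x * ennreal (norm x powr (-(d + \<alpha> + \<gamma>))) \<partial>lborel)"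
    unfolding eq by ((subst nn_integral_add; measurable?)+) (simp add: nn_integral_cmult nn_integral_cmult_indicator)
  also have "\<dots> \<le> ennreal (\<rho> powr (- d)) * ennreal (unit_ball_vol d * \<rho> powr d)
      + ennreal (\<rho> powr (- d) * T) * ennreal (ball_powr_const DIM('a) \<gamma> * \<rho> powr (d - \<gamma>))
      + ennreal (\<rho> powr \<alpha>) * ennreal (exterior_powr_const DIM('a) (d + \<alpha>) * \<rho> powr (d - (d + \<alpha>)))
      + ennreal (\<rho> powr \<alpha> * T) * ennreal (exterior_powr_const DIM('a) (d + \<alpha> + \<gamma>) * \<rho> powr (d - (d + \<alpha> + \<gamma>)))"
    using \<alpha> \<gamma> \<rho> unfolding d_def
    by (intro add_mono mult_left_mono nn_integral_ball_norm_powr_le nn_integral_exterior_norm_powr_le)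
      (simp_all add: emeasure_cball powr_realpow)
  also have "\<dots> = ennreal (unit_ball_vol DIM('a) + exterior_powr_const DIM('a) (DIM('a) + \<alpha>)
        + T * (ball_powr_const DIM('a) \<gamma> + exterior_powr_const DIM('a) (DIM('a) + \<alpha> + \<gamma>)) * \<rho> powr (-\<gamma>))"
  proof -
    let ?cB = "ball_powr_const DIM('a) \<gamma>"
      and ?cE = "exterior_powr_const DIM('a) (d + \<alpha>)"
      and ?cE' = "exterior_powr_const DIM('a) (d + \<alpha> + \<gamma>)"
    have pos: "?cB > 0" "?cE > 0" "?cE' > 0"
      using \<alpha> \<gamma> by (simp_all add: d_def ball_powr_const_pos exterior_powr_const_pos)
    have "\<rho> powr (- d) * (unit_ball_vol d * \<rho> powr d) + \<rho> powr (- d) * T * (?cB * \<rho> powr (d - \<gamma>))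
        + \<rho> powr \<alpha> * (?cE * \<rho> powr (d - (d + \<alpha>))) + \<rho> powr \<alpha> * T * (?cE' * \<rho> powr (d - (d + \<alpha> + \<gamma>)))
      = unit_ball_vol d * (\<rho> powr (- d) * \<rho> powr d) + T * ?cB * (\<rho> powr (- d) * \<rho> powr (d - \<gamma>))
        + ?cE * (\<rho> powr \<alpha> * \<rho> powr (d - (d + \<alpha>))) + T * ?cE' * (\<rho> powr \<alpha> * \<rho> powr (d - (d + \<alpha> + \<gamma>)))"
      by (simp only: ac_simps)
    also have "\<dots> = unit_ball_vol d + ?cE + T * (?cB + ?cE') * \<rho> powr (-\<gamma>)"
      using \<rho> by (simp add: algebra_simps flip: powr_add)
    finally show ?thesis
      using pos T \<rho> unfolding d_def
      by (simp add: ennreal_mult[symmetric] ennreal_plus[symmetric] del: ennreal_plus)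
  qed
  finally show ?thesis .
qed

definition jump_profile :: "real \<Rightarrow> real \<Rightarrow> 'a::euclidean_space \<Rightarrow> real" where
  "jump_profile p \<alpha> x = indicator (cball 0 1) x * norm x powr (-p)
     + indicator {x. 1 \<le> norm x} x * norm x powr (-(real DIM('a) + \<alpha>))"

lemma jump_profile_nonneg: "jump_profile p \<alpha> x \<ge> 0"
  unfolding jump_profile_def by (auto simp: indicator_def)

lemma borel_measurable_jump_profile [measurable]:
  "jump_profile p \<alpha> \<in> borel_measurable (borel :: 'a::euclidean_space measure)"
proof -
  have "cball (0::'a) 1 \<in> sets borel" "{x::'a. 1 \<le> norm x} \<in> sets borel"
    by simp_all
  then show ?thesis
    unfolding jump_profile_def[abs_def] by measurable
qed

lemma jump_kernel_le_jump_profile: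
  fixes F :: "'a::euclidean_space \<Rightarrow> 'a \<Rightarrow> real"
  assumes A: "A \<ge> 0" and p: "real DIM('a) + \<alpha> - \<beta> \<le> p"
    and F: "\<forall>z w. \<bar>F z w\<bar> \<le> A * min (norm (z - w) powr \<beta>) 1"
  shows "(\<bar>F z w\<bar> + \<bar>F w z\<bar>) / norm (z - w) powr (real DIM('a) + \<alpha>) \<le> 2 * A * jump_profile p \<alpha> (w - z)"
proof (cases "z = w")
  case True
  then show ?thesis
    using A jump_profile_nonneg[of p \<alpha> "w - z"] by simp
next
  case False
  define n where "n = norm (w - z)"
  have n: "n > 0" "norm (z - w) = n"
    using False by (simp_all add: n_def norm_minus_commute)
  have "\<bar>F z w\<bar> + \<bar>F w z\<bar> \<le> 2 * A * min (n powr \<beta>) 1"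
    using F[rule_format, of z w] F[rule_format, of w z] n by (simp add: n_def)
  then have "(\<bar>F z w\<bar> + \<bar>F w z\<bar>) / norm (z - w) powr (real DIM('a) + \<alpha>)
      \<le> 2 * A * (min (n powr \<beta>) 1 / n powr (real DIM('a) + \<alpha>))"
    using n by (simp add: divide_right_mono)
  also have "\<dots> \<le> 2 * A * jump_profile p \<alpha> (w - z)"
  proof (rule mult_left_mono)
    show "min (n powr \<beta>) 1 / n powr (real DIM('a) + \<alpha>) \<le> jump_profile p \<alpha> (w - z)"
    proof (cases "n \<le> 1")
      case True
      then have "n powr \<beta> \<le> n powr (real DIM('a) + \<alpha> - p)"
        using n p by (intro powr_mono') auto
      then have "min (n powr \<beta>) 1 / n powr (real DIM('a) + \<alpha>) \<le> n powr (real DIM('a) + \<alpha> - p) / n powr (real DIM('a) + \<alpha>)"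
        by (intro divide_right_mono) auto
      also have "\<dots> = n powr (-p)"
        using n by (simp add: powr_diff[symmetric])
      finally show ?thesis
        using True by (simp add: jump_profile_def indicator_def n_def)
    next
      case False
      have "min (n powr \<beta>) 1 / n powr (real DIM('a) + \<alpha>) \<le> 1 / n powr (real DIM('a) + \<alpha>)"
        by (intro divide_right_mono) auto
      also have "\<dots> = n powr (-(real DIM('a) + \<alpha>))"
        by (rule powr_minus_divide[symmetric])
      finally show ?thesis
        using False by (simp add: jump_profile_def indicator_def n_def)
    qed
  qed (use A in simp)
  finally show ?thesis .
qed

lemma nn_integral_jump_profile_le:
  fixes z :: "'a::euclidean_space" and p \<alpha> :: real
  assumes p: "0 \<le> p" "p < real DIM('a)" and \<alpha>: "\<alpha> > 0"
  shows "(\<integral>\<^sup>+w. ennreal (jump_profile p \<alpha> (w - z)) \<partial>lborel)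
    \<le> ennreal (ball_powr_const DIM('a) p + exterior_powr_const DIM('a) (DIM('a) + \<alpha>))"
proof -
  let ?B = "cball (0::'a) 1" and ?E = "{x::'a. 1 \<le> norm x}"
  have [measurable]: "?B \<in> sets borel" "?E \<in> sets borel"
    by simp_all
  have "(\<integral>\<^sup>+w. ennreal (jump_profile p \<alpha> (w - z)) \<partial>lborel) = (\<integral>\<^sup>+(x::'a). ennreal (jump_profile p \<alpha> x) \<partial>lborel)"
    by (rule nn_integral_lborel_translate) measurable
  also have "\<dots> = (\<integral>\<^sup>+x. indicator ?B x * ennreal (norm x powr (-p)) \<partial>lborel)
      + (\<integral>\<^sup>+x. indicator ?E x * ennreal (norm x powr (-(real DIM('a) + \<alpha>))) \<partial>lborel)"
    by (subst nn_integral_add[symmetric], measurable)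
      (auto intro!: nn_integral_cong simp: jump_profile_def indicator_def ennreal_plus[symmetric] simp del: ennreal_plus)
  also have "\<dots> \<le> ennreal (ball_powr_const DIM('a) p * 1 powr (DIM('a) - p))
      + ennreal (exterior_powr_const DIM('a) (DIM('a) + \<alpha>) * 1 powr (DIM('a) - (DIM('a) + \<alpha>)))"
    using p \<alpha> by (intro add_mono nn_integral_ball_norm_powr_le nn_integral_exterior_norm_powr_le) auto
  also have "\<dots> = ennreal (ball_powr_const DIM('a) p + exterior_powr_const DIM('a) (DIM('a) + \<alpha>))"
    using p \<alpha> ball_powr_const_pos[of p "DIM('a)"] exterior_powr_const_pos[of "DIM('a)" "DIM('a) + \<alpha>"]
    by (simp add: ennreal_plus[symmetric] del: ennreal_plus)
  finally show ?thesis .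
qed

definition NF_integrand ::
    "real \<Rightarrow> real \<Rightarrow> 'a::euclidean_space set \<Rightarrow> ('a \<Rightarrow> 'a \<Rightarrow> real) \<Rightarrow> real \<Rightarrow> 'a \<Rightarrow> real \<Rightarrow> 'a \<Rightarrow> 'a \<Rightarrow> ennreal" where
  "NF_integrand \<alpha> \<gamma> D F t y s z w =
     indicator {0<..<t} s * indicator D z * indicator D w *
     ennreal (bdry_factor D \<alpha> \<gamma> s z * qker \<alpha> s y z
       * rpow (1 + (if y = z then 0 else min (norm (z - w)) (t powr (1 / \<alpha>)) / norm (y - z))) \<gamma>
       * (\<bar>F z w\<bar> + \<bar>F w z\<bar>) / norm (z - w) powr (real DIM('a) + \<alpha>))"

lemma NF_eq_SUP_NF_integrand:
  "NF \<alpha> \<gamma> D F t = (SUP y\<in>D. \<integral>\<^sup>+s. \<integral>\<^sup>+z. \<integral>\<^sup>+w. NF_integrand \<alpha> \<gamma> D F t y s z w \<partial>lborel \<partial>lborel \<partial>lborel)"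
  unfolding NF_def NF_integrand_def ..

lemma NF_integrand_le:
  fixes F :: "'a::euclidean_space \<Rightarrow> 'a \<Rightarrow> real"
  assumes \<alpha>: "0 < \<alpha>" and \<gamma>: "0 \<le> \<gamma>" and t: "t > 0" and A: "A \<ge> 0"
    and p: "real DIM('a) + \<alpha> - \<beta> \<le> p" and F: "\<forall>z w. \<bar>F z w\<bar> \<le> A * min (norm (z - w) powr \<beta>) 1"
  shows "NF_integrand \<alpha> \<gamma> D F t y s z w
    \<le> ennreal (indicator {0<..<t} s * 2 powr \<gamma> * qker_majorant \<alpha> \<gamma> (t powr (\<gamma> / \<alpha>)) (s powr (1 / \<alpha>)) (z - y))
      * ennreal (2 * A * jump_profile p \<alpha> (w - z))"
proof (cases "s \<in> {0<..<t}")
  case True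
  define B where "B = bdry_factor D \<alpha> \<gamma> s z"
  define Q where "Q = qker \<alpha> s y z * rpow (1 + (if y = z then 0 else min (norm (z - w)) (t powr (1 / \<alpha>)) / norm (y - z))) \<gamma>"
  define G where "G = (\<bar>F z w\<bar> + \<bar>F w z\<bar>) / norm (z - w) powr (real DIM('a) + \<alpha>)"
  have s: "s > 0"
    using True by simp
  have "B \<le> 1" "0 \<le> Q" "0 \<le> G"
    using bdry_factor_bounds[OF \<gamma> s] s unfolding B_def Q_def G_def qker_def rpow_def
    by (auto intro!: mult_nonneg_nonneg)
  moreover have "Q \<le> 2 powr \<gamma> * qker_majorant \<alpha> \<gamma> (t powr (\<gamma> / \<alpha>)) (s powr (1 / \<alpha>)) (z - y)"
    unfolding Q_def using \<alpha> \<gamma> t s by (rule qker_mult_rpow_le_majorant)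
  moreover have "G \<le> 2 * A * jump_profile p \<alpha> (w - z)"
    unfolding G_def using A p F by (rule jump_kernel_le_jump_profile)
  ultimately have "B * Q * G \<le> 1 * (2 powr \<gamma> * qker_majorant \<alpha> \<gamma> (t powr (\<gamma> / \<alpha>)) (s powr (1 / \<alpha>)) (z - y))
      * (2 * A * jump_profile p \<alpha> (w - z))"
    using bdry_factor_bounds[OF \<gamma> s] by (intro mult_mono) (auto simp: B_def)
  then have "ennreal (B * Q * G) \<le> ennreal (indicator {0<..<t} s * 2 powr \<gamma> * qker_majorant \<alpha> \<gamma> (t powr (\<gamma> / \<alpha>)) (s powr (1 / \<alpha>)) (z - y))
      * ennreal (2 * A * jump_profile p \<alpha> (w - z))"
    using True qker_majorant_nonneg[of "t powr (\<gamma> / \<alpha>)" \<alpha> \<gamma> "s powr (1 / \<alpha>)" "z - y"]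
    by (subst ennreal_mult'[symmetric]) (simp_all add: ennreal_leI mult_ac)
  moreover have "NF_integrand \<alpha> \<gamma> D F t y s z w \<le> ennreal (B * Q * G)"
    unfolding NF_integrand_def B_def Q_def G_def by (simp add: indicator_def mult.assoc)
  ultimately show ?thesis
    by (rule order_trans[rotated])
qed (simp add: NF_integrand_def)

lemma nn_integral_NF_integrand_le:
  fixes F :: "'a::euclidean_space \<Rightarrow> 'a \<Rightarrow> real" and \<alpha> \<gamma> :: real
  assumes \<alpha>: "0 < \<alpha>" and \<gamma>: "0 \<le> \<gamma>" and t: "t > 0" and A: "A \<ge> 0"
    and p: "0 \<le> p" "p < real DIM('a)" "real DIM('a) + \<alpha> - \<beta> \<le> p"
    and F: "\<forall>z w. \<bar>F z w\<bar> \<le> A * min (norm (z - w) powr \<beta>) 1"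
  shows "(\<integral>\<^sup>+w. NF_integrand \<alpha> \<gamma> D F t y s z w \<partial>lborel)
    \<le> ennreal (indicator {0<..<t} s * (2 powr \<gamma> * (2 * A) * (ball_powr_const DIM('a) p + exterior_powr_const DIM('a) (DIM('a) + \<alpha>)))
        * qker_majorant \<alpha> \<gamma> (t powr (\<gamma> / \<alpha>)) (s powr (1 / \<alpha>)) (z - y))"
proof -
  let ?Q = "indicator {0<..<t} s * 2 powr \<gamma> * qker_majorant \<alpha> \<gamma> (t powr (\<gamma> / \<alpha>)) (s powr (1 / \<alpha>)) (z - y)"
    and ?C = "ball_powr_const DIM('a) p + exterior_powr_const DIM('a) (DIM('a) + \<alpha>)"
  have "(\<integral>\<^sup>+w. NF_integrand \<alpha> \<gamma> D F t y s z w \<partial>lborel)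
      \<le> (\<integral>\<^sup>+w. ennreal ?Q * ennreal (2 * A) * ennreal (jump_profile p \<alpha> (w - z)) \<partial>lborel)"
    using NF_integrand_le[OF \<alpha> \<gamma> t A p(3) F] A
    by (intro nn_integral_mono) (simp add: ennreal_mult jump_profile_nonneg mult.assoc)
  also have "\<dots> = ennreal ?Q * ennreal (2 * A) * (\<integral>\<^sup>+w. ennreal (jump_profile p \<alpha> (w - z)) \<partial>lborel)"
    by (rule nn_integral_cmult) measurable
  also have "\<dots> \<le> ennreal ?Q * ennreal (2 * A) * ennreal ?C"
    using p \<alpha> by (intro mult_left_mono nn_integral_jump_profile_le) auto
  also have "\<dots> = ennreal (indicator {0<..<t} s * (2 powr \<gamma> * (2 * A) * ?C)
        * qker_majorant \<alpha> \<gamma> (t powr (\<gamma> / \<alpha>)) (s powr (1 / \<alpha>)) (z - y))"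
    using A qker_majorant_nonneg[of "t powr (\<gamma> / \<alpha>)" \<alpha> \<gamma> "s powr (1 / \<alpha>)" "z - y"]
      ball_powr_const_pos[OF p(2)] exterior_powr_const_pos[of "DIM('a)" "DIM('a) + \<alpha>"] \<alpha>
    by (simp add: ennreal_mult'[symmetric] mult_ac del: ennreal_plus)
  finally show ?thesis .
qed

lemma nn_integral_indicator_qker_majorant_le:
  fixes y :: "'a::euclidean_space" and \<alpha> \<gamma> :: real
  assumes \<alpha>: "0 < \<alpha>" and \<gamma>: "0 \<le> \<gamma>" "\<gamma> < real DIM('a)" and T: "T \<ge> 0" and c: "c \<ge> 0"
  shows "(\<integral>\<^sup>+z. ennreal (indicator {0<..<t} s * c * qker_majorant \<alpha> \<gamma> T (s powr (1 / \<alpha>)) (z - y)) \<partial>lborel)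
    \<le> ennreal (indicator {0<..<t} s * c * (unit_ball_vol DIM('a) + exterior_powr_const DIM('a) (DIM('a) + \<alpha>)
        + T * (ball_powr_const DIM('a) \<gamma> + exterior_powr_const DIM('a) (DIM('a) + \<alpha> + \<gamma>)) * s powr (- (\<gamma> / \<alpha>))))"
proof (cases "s \<in> {0<..<t}")
  case True
  then have s: "s > 0"
    by simp
  have "(\<integral>\<^sup>+z. ennreal (indicator {0<..<t} s * c * qker_majorant \<alpha> \<gamma> T (s powr (1 / \<alpha>)) (z - y)) \<partial>lborel)
      = ennreal c * (\<integral>\<^sup>+z. ennreal (qker_majorant \<alpha> \<gamma> T (s powr (1 / \<alpha>)) (z - y)) \<partial>lborel)"
    using True c qker_majorant_nonneg[OF T]
    by (subst nn_integral_cmult[symmetric], measurable) (simp add: ennreal_mult')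
  also have "\<dots> = ennreal c * (\<integral>\<^sup>+(x::'a). ennreal (qker_majorant \<alpha> \<gamma> T (s powr (1 / \<alpha>)) x) \<partial>lborel)"
    using nn_integral_lborel_translate[of "\<lambda>x. ennreal (qker_majorant \<alpha> \<gamma> T (s powr (1 / \<alpha>)) x)" y]
    by simp
  also have "\<dots> \<le> ennreal c * ennreal (unit_ball_vol DIM('a) + exterior_powr_const DIM('a) (DIM('a) + \<alpha>)
        + T * (ball_powr_const DIM('a) \<gamma> + exterior_powr_const DIM('a) (DIM('a) + \<alpha> + \<gamma>)) * (s powr (1 / \<alpha>)) powr (- \<gamma>))"
    using \<alpha> \<gamma> T s by (intro mult_left_mono nn_integral_qker_majorant_le) auto
  finally show ?thesis
    using True c T \<alpha> \<gamma> s ball_powr_const_pos[of \<gamma> "DIM('a)"]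
      exterior_powr_const_pos[of "DIM('a)" "DIM('a) + \<alpha>"] exterior_powr_const_pos[of "DIM('a)" "DIM('a) + \<alpha> + \<gamma>"]
    by (simp add: powr_powr ennreal_mult'[symmetric] del: ennreal_plus)
qed simp

definition NF_const :: "nat \<Rightarrow> real \<Rightarrow> real \<Rightarrow> real \<Rightarrow> real" where
  "NF_const n \<alpha> \<gamma> \<beta> =
     2 powr \<gamma> * 2 * (ball_powr_const n (max 0 (n + \<alpha> - \<beta>)) + exterior_powr_const n (n + \<alpha>))
     * (unit_ball_vol n + exterior_powr_const n (n + \<alpha>)
        + (ball_powr_const n \<gamma> + exterior_powr_const n (n + \<alpha> + \<gamma>)) / (1 - \<gamma> / \<alpha>))"

lemma NF_const_pos:
  assumes "0 < \<alpha>" "0 \<le> \<gamma>" "\<gamma> < min \<alpha> (real n)" "\<alpha> < \<beta>"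
  shows "NF_const n \<alpha> \<gamma> \<beta> > 0"
  using assms unfolding NF_const_def
  by (intro mult_pos_pos add_pos_pos add_pos_nonneg divide_nonneg_pos less_imp_le
      ball_powr_const_pos exterior_powr_const_pos) auto

lemma NF_le:
  fixes \<alpha> \<gamma> \<beta> :: real and F :: "'a::euclidean_space \<Rightarrow> 'a \<Rightarrow> real"
  assumes \<alpha>: "0 < \<alpha>" and \<gamma>: "0 \<le> \<gamma>" "\<gamma> < min \<alpha> (real DIM('a))" and \<beta>: "\<alpha> < \<beta>" and A: "A \<ge> 0"
    and F: "\<forall>z w. \<bar>F z w\<bar> \<le> A * min (norm (z - w) powr \<beta>) 1" and t: "t > 0"
  shows "NF \<alpha> \<gamma> D F t \<le> ennreal (NF_const DIM('a) \<alpha> \<gamma> \<beta> * A * t)"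
proof -
  define p where "p = max 0 (real DIM('a) + \<alpha> - \<beta>)"
  define Cw where "Cw = ball_powr_const DIM('a) p + exterior_powr_const DIM('a) (DIM('a) + \<alpha>)"
  define M1 where "M1 = unit_ball_vol DIM('a) + exterior_powr_const DIM('a) (DIM('a) + \<alpha>)"
  define M2 where "M2 = ball_powr_const DIM('a) \<gamma> + exterior_powr_const DIM('a) (DIM('a) + \<alpha> + \<gamma>)"
  define q where "q = \<gamma> / \<alpha>"
  define T where "T = t powr q"
  have p: "0 \<le> p" "p < real DIM('a)" "real DIM('a) + \<alpha> - \<beta> \<le> p"
    using \<alpha> \<beta> by (auto simp: p_def)
  have q: "0 \<le> q" "q < 1"
    using \<alpha> \<gamma> by (auto simp: q_def)
  have \<gamma>_dim: "\<gamma> < real DIM('a)"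
    using \<gamma> by simp
  have nonneg: "Cw \<ge> 0" "M1 \<ge> 0" "M2 \<ge> 0" "T \<ge> 0"
    using \<alpha> \<gamma> p unfolding Cw_def M1_def M2_def T_def
    by (auto intro!: less_imp_le add_pos_pos ball_powr_const_pos exterior_powr_const_pos)
  define K where "K = 2 powr \<gamma> * (2 * A) * Cw"
  have K: "K \<ge> 0"
    using A nonneg by (simp add: K_def)
  have "(\<integral>\<^sup>+s. \<integral>\<^sup>+z. \<integral>\<^sup>+w. NF_integrand \<alpha> \<gamma> D F t y s z w \<partial>lborel \<partial>lborel \<partial>lborel)
      \<le> ennreal (NF_const DIM('a) \<alpha> \<gamma> \<beta> * A * t)" for y
  proof -
    have "(\<integral>\<^sup>+s. \<integral>\<^sup>+z. \<integral>\<^sup>+w. NF_integrand \<alpha> \<gamma> D F t y s z w \<partial>lborel \<partial>lborel \<partial>lborel)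
        \<le> (\<integral>\<^sup>+s. \<integral>\<^sup>+z. ennreal (indicator {0<..<t} s * K * qker_majorant \<alpha> \<gamma> T (s powr (1 / \<alpha>)) (z - y)) \<partial>lborel \<partial>lborel)"
      using nn_integral_NF_integrand_le[OF \<alpha> \<gamma>(1) t A p F]
      unfolding K_def Cw_def T_def q_def by (intro nn_integral_mono)
    also have "\<dots> \<le> (\<integral>\<^sup>+s. ennreal (indicator {0<..<t} s * K * (M1 + T * M2 * s powr (- q))) \<partial>lborel)"
      using nn_integral_indicator_qker_majorant_le[OF \<alpha> \<gamma>(1) \<gamma>_dim nonneg(4) K]
      unfolding M1_def M2_def q_def by (intro nn_integral_mono) simp
    also have "\<dots> \<le> ennreal (K * (M1 * t + T * M2 * (t powr (1 - q) / (1 - q))))"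
      using nonneg K by (intro nn_integral_Ioo_const_plus_powr_le q t) simp_all
    also have "\<dots> = ennreal (NF_const DIM('a) \<alpha> \<gamma> \<beta> * A * t)"
    proof -
      have "NF_const DIM('a) \<alpha> \<gamma> \<beta> = 2 powr \<gamma> * 2 * Cw * (M1 + M2 / (1 - q))"
        by (simp add: NF_const_def Cw_def M1_def M2_def p_def q_def)
      moreover have "T * (t powr (1 - q) / (1 - q)) = t / (1 - q)"
        using t by (simp add: T_def flip: powr_add)
      ultimately have "K * (M1 * t + T * M2 * (t powr (1 - q) / (1 - q))) = NF_const DIM('a) \<alpha> \<gamma> \<beta> * A * t"
        by (auto simp: K_def algebra_simps)
      then show ?thesis
        by simp
    qed
    finally show ?thesis .
  qed
  then show ?thesis
    unfolding NF_eq_SUP_NF_integrand by (rule SUP_least)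
qed

lemma J_class_if_NF_le:
  assumes "\<forall>z\<in>D. \<forall>w\<in>D. \<bar>F z w\<bar> \<le> M" and NF: "\<And>t. t > 0 \<Longrightarrow> NF \<alpha> \<gamma> D F t \<le> ennreal (C * t)"
  shows "J_class \<alpha> \<gamma> D F"
  unfolding J_class_def
proof
  show "\<exists>M. \<forall>z\<in>D. \<forall>w\<in>D. \<bar>F z w\<bar> \<le> M"
    using assms(1) by blast
  have "((\<lambda>t. C * t) \<longlongrightarrow> C * 0) (at_right (0::real))"
    by (intro tendsto_intros)
  then have "((\<lambda>t. ennreal (C * t)) \<longlongrightarrow> ennreal (C * 0)) (at_right 0)"
    by (rule tendsto_ennrealI)
  then have lim: "((\<lambda>t. ennreal (C * t)) \<longlongrightarrow> 0) (at_right 0)"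
    by simp
  have "\<forall>\<^sub>F t in at_right 0. NF \<alpha> \<gamma> D F t \<le> ennreal (C * t)"
    using eventually_at_right_less[of "0::real"] by (rule eventually_mono) (rule NF)
  then show "(NF \<alpha> \<gamma> D F \<longlongrightarrow> 0) (at_right 0)"
    by (rule tendsto_sandwich[OF _ _ tendsto_const lim, rotated]) simp
qed

theorem proposition4p2:
  fixes \<alpha> \<gamma> \<beta> :: real
  assumes "0 < \<alpha>" "\<alpha> < 2" "0 \<le> \<gamma>" "\<gamma> < min \<alpha> (real DIM('a::euclidean_space))"
    and "\<beta> > \<alpha>"
  shows "\<exists>C>0. \<forall>(D::'a set) (F::'a \<Rightarrow> 'a \<Rightarrow> real) A.
           D \<in> sets borel \<longrightarrow> A > 0 \<longrightarrow> (\<lambda>(z, w). F z w) \<in> borel_measurable borel \<longrightarrow>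
           (\<forall>z w. \<bar>F z w\<bar> \<le> A * min (norm (z - w) powr \<beta>) 1) \<longrightarrow>
           (\<forall>t>0. NF \<alpha> \<gamma> D F t \<le> ennreal (C * A * t)) \<and> J_class \<alpha> \<gamma> D F"
proof (intro exI conjI allI impI)
  let ?C = "NF_const DIM('a) \<alpha> \<gamma> \<beta>"
  show "?C > 0"
    using assms by (intro NF_const_pos) auto
  fix D :: "'a set" and F :: "'a \<Rightarrow> 'a \<Rightarrow> real" and A :: real
  assume A: "A > 0" and F: "\<forall>z w. \<bar>F z w\<bar> \<le> A * min (norm (z - w) powr \<beta>) 1"
  show NF: "NF \<alpha> \<gamma> D F t \<le> ennreal (?C * A * t)" if "t > 0" for t
    using NF_le[OF assms(1,3,4,5) _ F that] A by simp
  have "\<bar>F z w\<bar> \<le> A" for z w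
    using A by (intro order_trans[OF F[rule_format] mult_left_le]) auto
  then show "J_class \<alpha> \<gamma> D F"
    using NF by (intro J_class_if_NF_le[where M = A and C = "?C * A"]) auto
qed

end
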